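(* Let $X$ and $Y$ be random variables such that $Y$ is absolutely continuous with a bounded density $f$, and set $M:=\sup_{y\in\mathbb R}|f(y)|$. Let $1\le p<\infty$, and assume $X$ and $Y$ have finite $p$th absolute moments. Then $$d_{KS}(X,Y)\le (p+1)^{1/(p+1)}\big(M\,d_p(X,Y)\big)^{p/(p+1)}.$$
   Context: $d_{KS}(X,Y):=\sup_{x\in\mathbb R}|P(X\le x)-P(Y\le x)|$ is the Kolmogorov–Smirnov distance. $d_p(X,Y):=\min\|X'-Y'\|_p$, the minimum taken over all couplings $(X',Y')$ with $X'\stackrel{d}{=}X$ and $Y'\stackrel{d}{=}Y$. *)

theory Defs
  imports "HOL-Probability.Probability"
begin

definition law :: "'a measure \<Rightarrow> ('a \<Rightarrow> real) \<Rightarrow> real measure" where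
  "law M X = distr M borel X"

definition d_KS :: "'a measure \<Rightarrow> ('a \<Rightarrow> real) \<Rightarrow> ('a \<Rightarrow> real) \<Rightarrow> real" where
  "d_KS M X Y = (SUP x::real. \<bar>prob_space.prob M {\<omega>\<in>space M. X \<omega> \<le> x}
                              - prob_space.prob M {\<omega>\<in>space M. Y \<omega> \<le> x}\<bar>)"

text \<open>Couplings of two laws: probability measures on R x R with the given marginals.
  A coupling (X',Y') is identified with its joint law.\<close>
definition couplings :: "real measure \<Rightarrow> real measure \<Rightarrow> (real \<times> real) measure set" where
  "couplings \<mu> \<nu> = {\<pi>. prob_space \<pi> \<and> sets \<pi> = sets (borel :: (real \<times> real) measure)
                        \<and> distr \<pi> borel fst = \<mu> \<and> distr \<pi> borel snd = \<nu>}"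

text \<open>Wasserstein p-distance: d_p = inf over couplings of (E|X'-Y'|^p)^(1/p).
  The p-th moment is taken as a nonnegative (ennreal) integral, so no integrability
  side conditions are hidden.\<close>
definition d_p :: "real \<Rightarrow> 'a measure \<Rightarrow> ('a \<Rightarrow> real) \<Rightarrow> ('a \<Rightarrow> real) \<Rightarrow> real" where
  "d_p p M X Y = (enn2real (INF \<pi>\<in>couplings (law M X) (law M Y).
        \<integral>\<^sup>+ z. ennreal (\<bar>fst z - snd z\<bar> powr p) \<partial>\<pi>)) powr (1 / p)"

end

theory Submission
  imports Defs
begin

(* Fix a coupling of the two laws and a point x. The difference of the distribution functions
   at x is at most the mass m of one of the sets {X <= x < Y}, {Y <= x < X}; on either set Y lies
   on one side of x and |X - Y| >= |Y - x|. Because the law of Y has density at most M, the mass m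
   is at best packed into the interval of length m / M adjacent to x (bathtub principle), so
   E |X - Y|^p >= M * integral_0^(m/M) u^p du = m^(p+1) / ((p+1) M^p). Taking the infimum over all
   couplings and solving for m gives the bound. *)

definition transport_cost :: "real \<Rightarrow> real measure \<Rightarrow> real measure \<Rightarrow> ennreal" where
  "transport_cost p \<mu> \<nu> = (INF \<pi>\<in>couplings \<mu> \<nu>. \<integral>\<^sup>+z. ennreal (\<bar>fst z - snd z\<bar> powr p) \<partial>\<pi>)"

lemma d_p_eq_transport_cost: "d_p p M X Y = enn2real (transport_cost p (law M X) (law M Y)) powr (1 / p)"
  by (simp add: d_p_def transport_cost_def)

lemma abs_diff_powr_le:
  fixes a b p :: real
  assumes "0 \<le> p"
  shows "\<bar>a - b\<bar> powr p \<le> 2 powr p * (\<bar>a\<bar> powr p + \<bar>b\<bar> powr p)"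
proof -
  have "\<bar>a - b\<bar> powr p \<le> (2 * max \<bar>a\<bar> \<bar>b\<bar>) powr p"
    using assms by (intro powr_mono2) auto
  also have "\<dots> = 2 powr p * max \<bar>a\<bar> \<bar>b\<bar> powr p"
    by (simp add: powr_mult)
  also have "max \<bar>a\<bar> \<bar>b\<bar> powr p \<le> \<bar>a\<bar> powr p + \<bar>b\<bar> powr p"
    by (simp add: max_def)
  finally show ?thesis by simp
qed

lemma measurable_fst_borel [measurable]:
  "fst \<in> borel_measurable (borel :: ('a::topological_space \<times> 'b::topological_space) measure)"
  by (intro borel_measurable_continuous_onI continuous_on_fst continuous_on_id)

lemma measurable_snd_borel [measurable]:
  "snd \<in> borel_measurable (borel :: ('a::topological_space \<times> 'b::topological_space) measure)"
  by (intro borel_measurable_continuous_onI continuous_on_snd continuous_on_id)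

lemma (in finite_measure) finite_measure_diff_le_Diff:
  assumes "A \<in> sets M" and "B \<in> sets M"
  shows "measure M A - measure M B \<le> measure M (A - B)"
  using finite_measure_Diff'[OF assms] finite_measure_mono[of "A \<inter> B" B] assms by simp

lemma measure_law_atMost:
  assumes "X \<in> borel_measurable M"
  shows "measure (law M X) {..x} = measure M {\<omega>\<in>space M. X \<omega> \<le> x}"
  using assms by (simp add: law_def measure_distr vimage_def Int_def conj_commute)

lemma nn_integral_powr_deficit:
  fixes c p s x :: real
  assumes "0 \<le> c" and "0 \<le> p" and "\<bar>s\<bar> = 1"
  shows "(\<integral>\<^sup>+y. ennreal (indicator {0..c} (s * (y - x)) * (c powr p - (s * (y - x)) powr p)) \<partial>lborel)
         = ennreal (p / (p + 1) * c powr (p + 1))"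
proof -
  let ?h = "\<lambda>u::real. indicator {0..c} u * (c powr p - u powr p)"
  have "((\<lambda>u. c powr p - u powr p) has_integral (c * c powr p - c powr (p + 1) / (p + 1))) {0..c}"
    using has_integral_diff[OF has_integral_const_real has_integral_powr_from_0] assms by simp
  moreover have "c * c powr p - c powr (p + 1) / (p + 1) = p / (p + 1) * c powr (p + 1)"
    using assms by (cases "c = 0") (auto simp: powr_add field_simps)
  moreover have "?h = (\<lambda>u. if u \<in> {0..c} then c powr p - u powr p else 0)"
    by (auto simp: fun_eq_iff)
  ultimately have "(?h has_integral (p / (p + 1) * c powr (p + 1))) UNIV"
    by (simp only: has_integral_restrict_UNIV)
  then have "(\<integral>\<^sup>+u. ennreal (?h u) \<partial>lborel) = ennreal (p / (p + 1) * c powr (p + 1))"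
    by (rule nn_integral_has_integral_lborel[rotated 2])
       (use \<open>0 \<le> p\<close> in \<open>auto simp: indicator_def intro: powr_mono2\<close>)
  moreover have "(\<integral>\<^sup>+y. ennreal (?h (s * (y - x))) \<partial>lborel) = (\<integral>\<^sup>+u. ennreal (?h u) \<partial>lborel)"
    using nn_integral_real_affine[of "\<lambda>y. ennreal (?h (s * (y - x)))" s x] assms
    by (simp add: mult.assoc[symmetric] abs_if split: if_splits)
  ultimately show ?thesis by simp
qed

lemma nn_integral_comp_le_bounded_density:
  fixes g h :: "real \<Rightarrow> ennreal"
  assumes [measurable]: "Y \<in> borel_measurable \<pi>" "g \<in> borel_measurable borel" "h \<in> borel_measurable borel"
    and "distr \<pi> borel Y = density lborel g" and "\<And>y. g y \<le> ennreal K"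
  shows "(\<integral>\<^sup>+\<omega>. h (Y \<omega>) \<partial>\<pi>) \<le> ennreal K * (\<integral>\<^sup>+y. h y \<partial>lborel)"
proof -
  have "(\<integral>\<^sup>+\<omega>. h (Y \<omega>) \<partial>\<pi>) = (\<integral>\<^sup>+y. h y \<partial>distr \<pi> borel Y)"
    by (simp add: nn_integral_distr)
  also have "\<dots> = (\<integral>\<^sup>+y. g y * h y \<partial>lborel)"
    unfolding assms(4) by (simp add: nn_integral_density)
  also have "\<dots> \<le> (\<integral>\<^sup>+y. ennreal K * h y \<partial>lborel)"
    by (intro nn_integral_mono mult_right_mono assms(5)) simp
  finally show ?thesis
    by (simp add: nn_integral_cmult)
qed

lemma bathtub_identity:
  fixes m K p :: real
  assumes "0 \<le> m" and "0 < K" and "0 \<le> p"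
  shows "(m / K) powr p * m = m powr (p + 1) / ((p + 1) * K powr p) + K * (p / (p + 1) * (m / K) powr (p + 1))"
proof -
  define q where "q = m powr (p + 1) / K powr p"
  have "(m / K) powr p * m = q" and "K * (m / K) powr (p + 1) = q"
    using assms by (simp_all add: q_def powr_divide powr_add)
  moreover have "q = q / (p + 1) + p / (p + 1) * q"
    using \<open>0 \<le> p\<close> by (simp add: divide_simps) (simp add: algebra_simps)
  moreover have "m powr (p + 1) / ((p + 1) * K powr p) = q / (p + 1)"
    by (simp add: q_def)
  ultimately show ?thesis
    by (metis mult.left_commute)
qed

lemma powr_le_add_deficit:
  fixes c p u :: real
  assumes "0 \<le> c" and "0 \<le> p" and "0 \<le> u"
  shows "c powr p \<le> u powr p + indicator {0..c} u * (c powr p - u powr p)"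
proof (cases "u \<le> c")
  case False
  then show ?thesis
    using assms by (simp add: powr_mono2)
qed (use assms in simp)

lemma bathtub_inequality:
  fixes \<pi> :: "'b measure" and Y :: "'b \<Rightarrow> real" and g :: "real \<Rightarrow> ennreal"
  assumes "finite_measure \<pi>" and [measurable]: "Y \<in> borel_measurable \<pi>"
    and [measurable]: "g \<in> borel_measurable borel"
    and distr_Y: "distr \<pi> borel Y = density lborel g"
    and g_le: "\<And>y. g y \<le> ennreal K" and "0 < K" and "0 \<le> p"
    and [measurable]: "B \<in> sets \<pi>"
    and one_sided: "(\<forall>\<omega>\<in>B. x \<le> Y \<omega>) \<or> (\<forall>\<omega>\<in>B. Y \<omega> \<le> x)"
  shows "ennreal (measure \<pi> B powr (p + 1) / ((p + 1) * K powr p))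
         \<le> (\<integral>\<^sup>+\<omega>\<in>B. ennreal (\<bar>Y \<omega> - x\<bar> powr p) \<partial>\<pi>)"
proof -
  interpret finite_measure \<pi> by fact
  obtain s :: real where s: "\<bar>s\<bar> = 1" and abs_eq: "\<And>\<omega>. \<omega> \<in> B \<Longrightarrow> \<bar>Y \<omega> - x\<bar> = s * (Y \<omega> - x)"
    using one_sided by (metis abs_minus_commute abs_of_nonneg abs_one abs_minus_cancel diff_ge_0_iff_ge
        mult_1 mult_minus1 minus_diff_eq)
  define m where "m = measure \<pi> B"
  \<comment> \<open>\<open>c\<close> is the length of the interval next to \<open>x\<close> that a density bounded by \<open>K\<close> needs
    to carry the mass \<open>m\<close>; \<open>h\<close> is the deficit of \<open>\<bar>y - x\<bar> powr p\<close> below \<open>c powr p\<close> on that interval.\<close>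
  define c where "c = m / K"
  have "0 \<le> m" and "0 \<le> c"
    using \<open>0 < K\<close> by (simp_all add: c_def m_def)
  define h where "h y = indicator {0..c} (s * (y - x)) * (c powr p - (s * (y - x)) powr p)" for y
  have h_nonneg: "0 \<le> h y" for y
    using \<open>0 \<le> p\<close> by (auto simp: h_def indicator_def intro: powr_mono2)
  have [measurable]: "h \<in> borel_measurable borel"
    unfolding h_def by measurable
  have cover: "c powr p * indicator B \<omega> \<le> indicator B \<omega> * \<bar>Y \<omega> - x\<bar> powr p + h (Y \<omega>)" for \<omega>
    using powr_le_add_deficit[OF \<open>0 \<le> c\<close> \<open>0 \<le> p\<close> abs_ge_zero, of "Y \<omega> - x"] abs_eq[of \<omega>] h_nonneg[of "Y \<omega>"]
    by (cases "\<omega> \<in> B") (simp_all add: h_def)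
  have "(\<integral>\<^sup>+\<omega>. ennreal (h (Y \<omega>)) \<partial>\<pi>) \<le> ennreal K * ennreal (p / (p + 1) * c powr (p + 1))"
    using nn_integral_comp_le_bounded_density[OF _ _ _ distr_Y g_le, of "\<lambda>y. ennreal (h y)"]
      nn_integral_powr_deficit[OF \<open>0 \<le> c\<close> \<open>0 \<le> p\<close> s, of x]
    by (simp add: h_def)
  also have "\<dots> = ennreal (K * (p / (p + 1) * c powr (p + 1)))"
    by (rule ennreal_mult[symmetric]) (use \<open>0 < K\<close> \<open>0 \<le> p\<close> in auto)
  finally have deficit: "(\<integral>\<^sup>+\<omega>. ennreal (h (Y \<omega>)) \<partial>\<pi>) \<le> ennreal (K * (p / (p + 1) * c powr (p + 1)))" .
  have "ennreal (c powr p * m) = (\<integral>\<^sup>+\<omega>. ennreal (c powr p * indicator B \<omega>) \<partial>\<pi>)"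
    by (simp add: m_def emeasure_eq_measure ennreal_mult ennreal_indicator nn_integral_cmult_indicator)
  also have "\<dots> \<le> (\<integral>\<^sup>+\<omega>. ennreal (indicator B \<omega> * \<bar>Y \<omega> - x\<bar> powr p) + ennreal (h (Y \<omega>)) \<partial>\<pi>)"
    by (intro nn_integral_mono) (simp add: cover h_nonneg flip: ennreal_plus)
  also have "\<dots> = (\<integral>\<^sup>+\<omega>\<in>B. ennreal (\<bar>Y \<omega> - x\<bar> powr p) \<partial>\<pi>) + (\<integral>\<^sup>+\<omega>. ennreal (h (Y \<omega>)) \<partial>\<pi>)"
    by (subst nn_integral_add) (auto simp: ennreal_mult' ennreal_indicator mult.commute)
  also have "\<dots> \<le> (\<integral>\<^sup>+\<omega>\<in>B. ennreal (\<bar>Y \<omega> - x\<bar> powr p) \<partial>\<pi>) + ennreal (K * (p / (p + 1) * c powr (p + 1)))"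
    using deficit by (rule add_left_mono)
  finally show ?thesis
    using bathtub_identity[OF \<open>0 \<le> m\<close> \<open>0 < K\<close> \<open>0 \<le> p\<close>] \<open>0 < K\<close> \<open>0 \<le> p\<close> \<open>0 \<le> c\<close>
    by (simp add: m_def c_def)
qed

lemma density_bound_pos:
  assumes "prob_space (density lborel g)" and "\<And>y. g y \<le> ennreal K"
  shows "0 < K"
proof (rule ccontr)
  assume "\<not> 0 < K"
  then have "ennreal K = 0"
    by (simp add: ennreal_eq_0_iff)
  then have "g = (\<lambda>_. 0)"
    using assms(2) by (simp add: fun_eq_iff)
  then show False
    using prob_space.emeasure_space_1[OF assms(1)] by (simp add: emeasure_density)
qed

lemma measure_couplings_fst:
  assumes "\<pi> \<in> couplings \<mu> \<nu>" and "A \<in> sets borel"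
  shows "measure \<pi> {z. fst z \<in> A} = measure \<mu> A"
proof -
  have "sets \<pi> = sets borel" and "distr \<pi> borel fst = \<mu>"
    using assms(1) by (auto simp: couplings_def)
  then show ?thesis
    using assms(2) sets_eq_imp_space_eq[of \<pi> borel] measurable_cong_sets[of \<pi> borel borel borel]
    by (auto simp: measure_distr vimage_def)
qed

lemma measure_couplings_snd:
  assumes "\<pi> \<in> couplings \<mu> \<nu>" and "A \<in> sets borel"
  shows "measure \<pi> {z. snd z \<in> A} = measure \<nu> A"
proof -
  have "sets \<pi> = sets borel" and "distr \<pi> borel snd = \<nu>"
    using assms(1) by (auto simp: couplings_def)
  then show ?thesis
    using assms(2) sets_eq_imp_space_eq[of \<pi> borel] measurable_cong_sets[of \<pi> borel borel borel]
    by (auto simp: measure_distr vimage_def)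
qed

lemma cdf_diff_le_crossing_mass:
  assumes coupling: "\<pi> \<in> couplings \<mu> \<nu>"
  shows "\<bar>measure \<mu> {..x} - measure \<nu> {..x}\<bar>
         \<le> max (measure \<pi> {z. fst z \<le> x \<and> x < snd z}) (measure \<pi> {z. snd z \<le> x \<and> x < fst z})"
proof -
  have "prob_space \<pi>" and sets_\<pi>: "sets \<pi> = sets borel"
    using coupling by (auto simp: couplings_def)
  interpret prob_space \<pi> by fact
  define F where "F = {z :: real \<times> real. fst z \<le> x}"
  define G where "G = {z :: real \<times> real. snd z \<le> x}"
  have "F \<in> sets \<pi>" "G \<in> sets \<pi>"
    unfolding F_def G_def sets_\<pi> by measurable
  moreover have "F - G = {z. fst z \<le> x \<and> x < snd z}" and "G - F = {z. snd z \<le> x \<and> x < fst z}"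
    by (auto simp: F_def G_def)
  moreover have "measure \<mu> {..x} = measure \<pi> F" and "measure \<nu> {..x} = measure \<pi> G"
    using measure_couplings_fst[OF coupling, of "{..x}"] measure_couplings_snd[OF coupling, of "{..x}"]
    by (simp_all add: F_def G_def)
  ultimately show ?thesis
    using finite_measure_diff_le_Diff[of F G] finite_measure_diff_le_Diff[of G F] by auto
qed

lemma coupling_cost_ge_crossing_mass:
  fixes g :: "real \<Rightarrow> ennreal"
  assumes coupling: "\<pi> \<in> couplings \<mu> \<nu>"
    and [measurable]: "g \<in> borel_measurable borel" and "\<nu> = density lborel g"
    and "\<And>y. g y \<le> ennreal K" and "0 < K" and "0 \<le> p"
    and crossing: "B = {z. fst z \<le> x \<and> x < snd z} \<or> B = {z. snd z \<le> x \<and> x < fst z}"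
  shows "ennreal (measure \<pi> B powr (p + 1) / ((p + 1) * K powr p))
         \<le> (\<integral>\<^sup>+z. ennreal (\<bar>fst z - snd z\<bar> powr p) \<partial>\<pi>)"
proof -
  have "prob_space \<pi>" and sets_\<pi>: "sets \<pi> = sets borel" and distr_snd: "distr \<pi> borel snd = \<nu>"
    using coupling by (auto simp: couplings_def)
  interpret prob_space \<pi> by fact
  have [measurable]: "snd \<in> borel_measurable \<pi>"
    by (simp add: measurable_cong_sets[OF sets_\<pi> refl])
  have "B \<in> sets \<pi>"
    using crossing unfolding sets_\<pi> by (elim disjE) simp_all
  moreover have "(\<forall>z\<in>B. x \<le> snd z) \<or> (\<forall>z\<in>B. snd z \<le> x)"
    using crossing by (elim disjE) auto
  ultimately have "ennreal (measure \<pi> B powr (p + 1) / ((p + 1) * K powr p))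
      \<le> (\<integral>\<^sup>+z\<in>B. ennreal (\<bar>snd z - x\<bar> powr p) \<partial>\<pi>)"
    using assms(2-6) distr_snd by (intro bathtub_inequality[where g = g] finite_measure_axioms) simp_all
  also have "\<dots> \<le> (\<integral>\<^sup>+z. ennreal (\<bar>fst z - snd z\<bar> powr p) \<partial>\<pi>)"
  proof (intro nn_integral_mono)
    fix z
    have "z \<in> B \<Longrightarrow> \<bar>snd z - x\<bar> \<le> \<bar>fst z - snd z\<bar>"
      using crossing by (elim disjE) auto
    then show "ennreal (\<bar>snd z - x\<bar> powr p) * indicator B z \<le> ennreal (\<bar>fst z - snd z\<bar> powr p)"
      using \<open>0 \<le> p\<close> by (cases "z \<in> B") (simp_all add: powr_mono2)
  qed
  finally show ?thesis .
qed

lemma cdf_diff_bound_by_coupling: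
  fixes g :: "real \<Rightarrow> ennreal"
  assumes "\<pi> \<in> couplings \<mu> \<nu>"
    and "g \<in> borel_measurable borel" and "\<nu> = density lborel g"
    and "\<And>y. g y \<le> ennreal K" and "0 < K" and "0 \<le> p"
  shows "ennreal (\<bar>measure \<mu> {..x} - measure \<nu> {..x}\<bar> powr (p + 1) / ((p + 1) * K powr p))
         \<le> (\<integral>\<^sup>+z. ennreal (\<bar>fst z - snd z\<bar> powr p) \<partial>\<pi>)"
proof -
  obtain B where crossing: "B = {z. fst z \<le> x \<and> x < snd z} \<or> B = {z. snd z \<le> x \<and> x < fst z}"
    and "\<bar>measure \<mu> {..x} - measure \<nu> {..x}\<bar> \<le> measure \<pi> B"
    using cdf_diff_le_crossing_mass[OF assms(1), of x] unfolding le_max_iff_disj by blast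
  then have "ennreal (\<bar>measure \<mu> {..x} - measure \<nu> {..x}\<bar> powr (p + 1) / ((p + 1) * K powr p))
      \<le> ennreal (measure \<pi> B powr (p + 1) / ((p + 1) * K powr p))"
    using \<open>0 < K\<close> \<open>0 \<le> p\<close> by (intro ennreal_leI divide_right_mono powr_mono2) auto
  also have "\<dots> \<le> (\<integral>\<^sup>+z. ennreal (\<bar>fst z - snd z\<bar> powr p) \<partial>\<pi>)"
    using assms crossing by (rule coupling_cost_ge_crossing_mass)
  finally show ?thesis .
qed

lemma bathtub_bound_inverse:
  fixes d K J p :: real
  assumes "0 \<le> d" and "0 < K" and "0 \<le> J" and "0 < p"
    and "d powr (p + 1) / ((p + 1) * K powr p) \<le> J"
  shows "d \<le> (p + 1) powr (1 / (p + 1)) * (K * J powr (1 / p)) powr (p / (p + 1))"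
proof -
  have "d powr (p + 1) \<le> (p + 1) * K powr p * J"
    using assms by (simp add: divide_le_eq mult_ac)
  then have "(d powr (p + 1)) powr (1 / (p + 1)) \<le> ((p + 1) * K powr p * J) powr (1 / (p + 1))"
    using assms by (intro powr_mono2) auto
  also have "(d powr (p + 1)) powr (1 / (p + 1)) = d"
    using assms by (simp add: powr_powr)
  also have "((p + 1) * K powr p * J) powr (1 / (p + 1))
      = (p + 1) powr (1 / (p + 1)) * K powr (p / (p + 1)) * (J powr (1 / p)) powr (p / (p + 1))"
    using assms by (simp add: powr_mult powr_powr)
  also have "\<dots> = (p + 1) powr (1 / (p + 1)) * (K * J powr (1 / p)) powr (p / (p + 1))"
    using assms by (simp add: powr_mult)
  finally show ?thesis .
qed

lemma cdf_diff_le_transport_cost: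
  fixes g :: "real \<Rightarrow> ennreal"
  assumes "g \<in> borel_measurable borel" and "\<nu> = density lborel g"
    and "\<And>y. g y \<le> ennreal K" and "0 < K" and "0 < p"
    and finite_cost: "transport_cost p \<mu> \<nu> < \<infinity>"
  shows "\<bar>measure \<mu> {..x} - measure \<nu> {..x}\<bar>
         \<le> (p + 1) powr (1 / (p + 1)) * (K * enn2real (transport_cost p \<mu> \<nu>) powr (1 / p)) powr (p / (p + 1))"
proof -
  define d where "d = \<bar>measure \<mu> {..x} - measure \<nu> {..x}\<bar>"
  have "ennreal (d powr (p + 1) / ((p + 1) * K powr p)) \<le> transport_cost p \<mu> \<nu>"
    unfolding transport_cost_def d_def using assms
    by (intro INF_greatest cdf_diff_bound_by_coupling) auto
  with finite_cost
  have "enn2real (ennreal (d powr (p + 1) / ((p + 1) * K powr p))) \<le> enn2real (transport_cost p \<mu> \<nu>)"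
    by (intro enn2real_mono) auto
  then show ?thesis
    unfolding d_def using assms(4,5) by (intro bathtub_bound_inverse) auto
qed

lemma joint_law_in_couplings:
  assumes "prob_space M" and [measurable]: "X \<in> borel_measurable M" "Y \<in> borel_measurable M"
  shows "distr M borel (\<lambda>\<omega>. (X \<omega>, Y \<omega>)) \<in> couplings (law M X) (law M Y)"
  unfolding couplings_def law_def
  by (simp add: prob_space.prob_space_distr[OF assms(1)] distr_distr comp_def)

lemma transport_cost_law_finite:
  assumes "prob_space M" and [measurable]: "X \<in> borel_measurable M" "Y \<in> borel_measurable M"
    and "0 \<le> p"
    and "integrable M (\<lambda>\<omega>. \<bar>X \<omega>\<bar> powr p)" and "integrable M (\<lambda>\<omega>. \<bar>Y \<omega>\<bar> powr p)"
  shows "transport_cost p (law M X) (law M Y) < \<infinity>"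
proof -
  have "transport_cost p (law M X) (law M Y)
      \<le> (\<integral>\<^sup>+z. ennreal (\<bar>fst z - snd z\<bar> powr p) \<partial>distr M borel (\<lambda>\<omega>. (X \<omega>, Y \<omega>)))"
    unfolding transport_cost_def by (rule INF_lower[OF joint_law_in_couplings[OF assms(1-3)]])
  also have "\<dots> = (\<integral>\<^sup>+\<omega>. ennreal (\<bar>X \<omega> - Y \<omega>\<bar> powr p) \<partial>M)"
    by (simp add: nn_integral_distr)
  also have "\<dots> \<le> (\<integral>\<^sup>+\<omega>. ennreal (2 powr p * (\<bar>X \<omega>\<bar> powr p + \<bar>Y \<omega>\<bar> powr p)) \<partial>M)"
    using \<open>0 \<le> p\<close> by (intro nn_integral_mono ennreal_leI abs_diff_powr_le)
  also have "\<dots> = ennreal (\<integral>\<omega>. 2 powr p * (\<bar>X \<omega>\<bar> powr p + \<bar>Y \<omega>\<bar> powr p) \<partial>M)"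
    using assms(5,6) by (intro nn_integral_eq_integral) auto
  also have "\<dots> < \<infinity>"
    by simp
  finally show ?thesis .
qed

theorem lemma5p1:
  fixes M :: "'a measure" and X Y :: "'a \<Rightarrow> real" and f :: "real \<Rightarrow> real" and p :: real
  assumes "prob_space M"
    and "X \<in> borel_measurable M"
    and "distributed M lborel Y (\<lambda>y. ennreal (f y))"
    and "bdd_above (range (\<lambda>y. \<bar>f y\<bar>))"
    and "1 \<le> p"
    and "integrable M (\<lambda>\<omega>. \<bar>X \<omega>\<bar> powr p)"
    and "integrable M (\<lambda>\<omega>. \<bar>Y \<omega>\<bar> powr p)"
  shows "d_KS M X Y \<le> (p + 1) powr (1 / (p + 1))
           * ((SUP y. \<bar>f y\<bar>) * d_p p M X Y) powr (p / (p + 1))"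
proof -
  interpret prob_space M by fact
  have [measurable]: "X \<in> borel_measurable M" "Y \<in> borel_measurable M"
      "(\<lambda>y. ennreal (f y)) \<in> borel_measurable borel"
    using assms(2) distributed_measurable[OF assms(3)] distributed_borel_measurable[OF assms(3)] by simp_all
  have law_Y: "law M Y = density lborel (\<lambda>y. ennreal (f y))"
    unfolding law_def distributed_distr_eq_density[OF assms(3), symmetric] by (rule distr_cong) auto
  define K where "K = (SUP y. \<bar>f y\<bar>)"
  have f_le: "ennreal (f y) \<le> ennreal K" for y
    using cSUP_upper[OF UNIV_I assms(4), of y] by (intro ennreal_leI) (simp add: K_def)
  have "prob_space (law M Y)"
    unfolding law_def by (rule prob_space_distr) simp
  then have "0 < K"
    unfolding law_Y using f_le by (rule density_bound_pos)
  \<comment> \<open>The moment assumptions are needed only here: \<open>enn2real\<close> sends an infinite cost to \<open>0\<close>.\<close>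
  moreover have "transport_cost p (law M X) (law M Y) < \<infinity>"
    using assms(1,5-7) by (intro transport_cost_law_finite) auto
  ultimately have "\<bar>prob {\<omega>\<in>space M. X \<omega> \<le> x} - prob {\<omega>\<in>space M. Y \<omega> \<le> x}\<bar>
      \<le> (p + 1) powr (1 / (p + 1)) * (K * d_p p M X Y) powr (p / (p + 1))" for x
    using cdf_diff_le_transport_cost[OF _ law_Y f_le, of p "law M X" x] assms(5)
    by (simp add: measure_law_atMost d_p_eq_transport_cost)
  then show ?thesis
    unfolding d_KS_def K_def[symmetric] by (intro cSUP_least) auto
qed

end
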